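(* Let $N\ge3$ be odd, $K=\tilde F(N)$, $L=N(N+1)$, $n=N$, and let $C^0,\dots,C^{K-1}$ be the sequences $c^m_i=\omega_{N+1}^{\pi_m(\langle i\rangle_N)\cdot i}$ ($0\le i<L$) built from a $K\times N$ circular Florentine rectangle with rows $\pi_0,\dots,\pi_{K-1}$. Let $\theta_c$ and $\theta_{\max}$ be as follows: $\theta_c=\max\{|\theta_{C^m,C^{m'}}(\tau)|:m\neq m',\ 0\le\tau<L\}$, $\theta_a=\max\{|\theta_{C^m}(\tau)|:0\le m<K,\ 0<\tau<L\}$, $\theta_{\max}=\max\{\theta_a,\theta_c\}$. Then $\theta_c=\frac{L}{\sqrt{L-n}}$ (i.e., equality holds in the bound $\theta_c\ge L/\sqrt{L-n}$). Moreover, setting $$\theta_{opti}=L\sqrt{\frac{(K-1)L+n}{(L-n)(KL-1)}},$$ if $N\to\infty$ through odd integers with $\tilde F(N)\to\infty$, then $\theta_{\max}/\theta_{opti}\to 1$.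
   Context: $\omega_n=e^{2\pi\sqrt{-1}/n}$; $\langle i\rangle_N$ is $i$ mod $N$. An $M\times N$ circular Florentine rectangle (CFR) over $\mathbb{Z}_N$ is an $M\times N$ array whose rows $\pi_i:\mathbb{Z}_N\to\mathbb{Z}_N$ are permutations such that for every $m\in\mathbb{Z}_N\setminus\{0\}$ and all $i,j,x,y$: $(\pi_i(x),\pi_i(x+m))=(\pi_j(y),\pi_j(y+m))$ (indices mod $N$) iff $i=j$ and $x=y$. $\tilde F(N)$ is the largest $M$ for which an $M\times N$ CFR exists. Periodic correlation: $\theta_{C,D}(\tau)=\sum_{t=0}^{L-1}c_td^*_{\langle t+\tau\rangle_L}$, $\theta_C=\theta_{C,C}$. These sequences have frequency-domain duals vanishing exactly on $\{1+a(N+1):a\in\mathbb{Z}_N\}$ (a set of $n=N$ carriers). *)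

theory Defs
  imports Complex_Main
begin

definition omega :: "nat \<Rightarrow> complex" where
  "omega n = cis (2 * pi / real n)"

definition is_CFR :: "nat \<Rightarrow> nat \<Rightarrow> (nat \<Rightarrow> nat \<Rightarrow> nat) \<Rightarrow> bool" where
  "is_CFR N M \<pi> \<longleftrightarrow>
     (\<forall>i<M. bij_betw (\<pi> i) {..<N} {..<N}) \<and>
     (\<forall>m. 1 \<le> m \<and> m < N \<longrightarrow>
        (\<forall>i<M. \<forall>j<M. \<forall>x<N. \<forall>y<N.
           (\<pi> i x = \<pi> j y \<and> \<pi> i ((x + m) mod N) = \<pi> j ((y + m) mod N))
           \<longleftrightarrow> (i = j \<and> x = y)))"

definition F_tilde :: "nat \<Rightarrow> nat" where
  "F_tilde N = (GREATEST M. \<exists>\<pi>. is_CFR N M \<pi>)"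

definition pcorr :: "nat \<Rightarrow> (nat \<Rightarrow> complex) \<Rightarrow> (nat \<Rightarrow> complex) \<Rightarrow> nat \<Rightarrow> complex" where
  "pcorr L c d \<tau> = (\<Sum>t<L. c t * cnj (d ((t + \<tau>) mod L)))"

definition cfr_seq :: "nat \<Rightarrow> (nat \<Rightarrow> nat \<Rightarrow> nat) \<Rightarrow> nat \<Rightarrow> nat \<Rightarrow> complex" where
  "cfr_seq N \<pi> m i = omega (N + 1) ^ (\<pi> m (i mod N) * i)"

definition theta_c :: "nat \<Rightarrow> nat \<Rightarrow> (nat \<Rightarrow> nat \<Rightarrow> nat) \<Rightarrow> real" where
  "theta_c N K \<pi> = Max {cmod (pcorr (N * (N + 1)) (cfr_seq N \<pi> m) (cfr_seq N \<pi> m') \<tau>) | m m' \<tau>.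
      m < K \<and> m' < K \<and> m \<noteq> m' \<and> \<tau> < N * (N + 1)}"

definition theta_a :: "nat \<Rightarrow> nat \<Rightarrow> (nat \<Rightarrow> nat \<Rightarrow> nat) \<Rightarrow> real" where
  "theta_a N K \<pi> = Max {cmod (pcorr (N * (N + 1)) (cfr_seq N \<pi> m) (cfr_seq N \<pi> m) \<tau>) | m \<tau>.
      m < K \<and> 0 < \<tau> \<and> \<tau> < N * (N + 1)}"

definition theta_max :: "nat \<Rightarrow> nat \<Rightarrow> (nat \<Rightarrow> nat \<Rightarrow> nat) \<Rightarrow> real" where
  "theta_max N K \<pi> = max (theta_a N K \<pi>) (theta_c N K \<pi>)"

definition theta_opti :: "nat \<Rightarrow> nat \<Rightarrow> nat \<Rightarrow> real" where
  "theta_opti K L n = real L * sqrt (((real K - 1) * real L + real n) /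
                                   ((real L - real n) * (real K * real L - 1)))"

end

theory Submission
  imports Defs "HOL-Analysis.Cartesian_Euclidean_Space" "HOL-Number_Theory.Cong" "HOL-Library.Real_Mod"
begin

text \<open>
  Write L = N(N+1), z = omega (N+1) and t = a + qN with a < N and q \<le> N. As z^N = z^-1, the
  t-th term of the correlation of rows i and j at shift tau is a unimodular phase depending only
  on a, times w_a^q with w_a = z^(pi_j((a + tau) mod N) - pi_i(a)). Summing over q annihilates
  every a except the coincidences pi_i(a) = pi_j((a + tau) mod N), and each coincidence
  contributes N + 1 times its phase.

  For distinct rows the Florentine property leaves at most one coincidence per shift, and some
  shift has one, so theta_c = N + 1 = L / sqrt (L - N). An autocorrelation has no coincidence
  unless N divides tau, and then its phases add up to N consecutive powers of a nontrivial
  (N+1)-th root of unity, a sum of modulus 1. Hence theta_max = N + 1, and theta_max / theta_opti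
  is 1 / sqrt r with r = ((K - 1) L + N) / (K L - 1), which lies between 1 - 1/K and 1.
\<close>

section \<open>Roots of unity\<close>

lemma norm_omega [simp]: "norm (omega n) = 1"
  by (simp add: omega_def)

lemma omega_nonzero [simp]: "omega n \<noteq> 0"
  using norm_omega[of n] by (metis norm_zero zero_neq_one)

lemma omega_powi_eq_1_iff:
  assumes "n > 0"
  shows "omega n powi k = 1 \<longleftrightarrow> int n dvd k"
proof -
  have "omega n powi k = 1 \<longleftrightarrow> (\<exists>m. of_int k * (2 * pi / real n) = of_int m * (2 * pi))"
    by (simp add: omega_def cis_power_int cis_eq_1_iff)
  also have "\<dots> \<longleftrightarrow> (\<exists>m. k = int n * m)"
    using assms by (auto simp: field_simps) (metis of_int_eq_iff of_int_mult of_int_of_nat_eq)+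
  finally show ?thesis
    by (auto simp: dvd_def)
qed

lemma omega_powi_add_mult:
  assumes "n > 0"
  shows "omega n powi (k + int n * m) = omega n powi k"
  using omega_powi_eq_1_iff[OF assms, of "int n * m"] by (simp add: power_int_add)

lemma omega_powi_diff_eq_1_iff:
  assumes "p \<le> n" "p' \<le> n"
  shows "omega (n + 1) powi (int p' - int p) = 1 \<longleftrightarrow> p = p'"
proof -
  have "int (n + 1) dvd int p' - int p \<longleftrightarrow> p = p'"
    using assms dvd_imp_le_int[of "int p' - int p" "int (n + 1)"]
    by (cases "p = p'") (auto simp: abs_if split: if_splits)
  then show ?thesis
    by (simp add: omega_powi_eq_1_iff)
qed

lemma cnj_omega: "cnj (omega n) = inverse (omega n)"
  by (simp add: omega_def cis_cnj)

lemma omega_power_mult_cnj_power: "omega n ^ k * cnj (omega n ^ l) = omega n powi (int k - int l)"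
  by (simp add: cnj_omega power_int_diff divide_inverse power_inverse)

lemma sum_power_root_of_unity:
  fixes w :: "'a :: field"
  assumes "w ^ n = 1"
  shows "(\<Sum>q<n. w ^ q) = (if w = 1 then of_nat n else 0)"
  using assms geometric_sum[of w n] by simp

lemma norm_sum_powers_root_of_unity:
  fixes y :: "'a :: real_normed_field"
  assumes "norm y = 1" "y ^ Suc n = 1" "y \<noteq> 1"
  shows "norm (\<Sum>v<n. y ^ v) = 1"
proof -
  have "(\<Sum>v<n. y ^ v) + y ^ n = 0"
    using sum_power_root_of_unity[OF assms(2)] assms(3) by simp
  then have "(\<Sum>v<n. y ^ v) = - (y ^ n)"
    by (simp add: eq_neg_iff_add_eq_0)
  then show ?thesis
    by (simp add: norm_power assms(1))
qed

section \<open>Correlations as sums over coincidences\<close>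

definition cfr_hits :: "nat \<Rightarrow> (nat \<Rightarrow> nat \<Rightarrow> nat) \<Rightarrow> nat \<Rightarrow> nat \<Rightarrow> nat \<Rightarrow> nat set" where
  "cfr_hits N \<pi> i j \<tau> = {a. a < N \<and> \<pi> i a = \<pi> j ((a + \<tau>) mod N)}"

definition cfr_phase :: "nat \<Rightarrow> (nat \<Rightarrow> nat \<Rightarrow> nat) \<Rightarrow> nat \<Rightarrow> nat \<Rightarrow> nat \<Rightarrow> nat \<Rightarrow> complex" where
  "cfr_phase N \<pi> i j \<tau> a =
     omega (N + 1) powi (int (\<pi> i a * a) - int (\<pi> j ((a + \<tau>) mod N) * (a + \<tau>)))"

lemma norm_cfr_phase [simp]: "norm (cfr_phase N \<pi> i j \<tau> a) = 1"
  by (simp add: cfr_phase_def norm_power_int)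

lemma cfr_seq_corr_term:
  fixes \<pi> :: "nat \<Rightarrow> nat \<Rightarrow> nat" and i j a \<tau> :: nat
  assumes "a < N"
  defines "p \<equiv> \<pi> i a" and "p' \<equiv> \<pi> j ((a + \<tau>) mod N)"
  shows "cfr_seq N \<pi> i (a + q * N) * cnj (cfr_seq N \<pi> j ((a + q * N + \<tau>) mod (N * (N + 1))))
       = cfr_phase N \<pi> i j \<tau> a * (omega (N + 1) powi (int p' - int p)) ^ q"
proof -
  define z where "z = omega (N + 1)"
  define t where "t = a + q * N"
  define s where "s = (t + \<tau>) mod (N * (N + 1))"
  define d where "d = (t + \<tau>) div (N * (N + 1))"
  have t_mod: "t mod N = a"
    using assms(1) by (simp add: t_def)
  have "s mod N = (t + \<tau>) mod N"
    unfolding s_def by (rule mod_mod_cancel) simp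
  also have "t + \<tau> = (a + \<tau>) + q * N"
    by (simp add: t_def)
  finally have s_mod: "s mod N = (a + \<tau>) mod N"
    by simp
  have "d * (N * (N + 1)) + s = t + \<tau>"
    unfolding s_def d_def by (rule div_mult_mod_eq)
  then have s_int: "int s = int t + int \<tau> - int (N * (N + 1)) * int d"
    by (simp add: algebra_simps flip: of_nat_add of_nat_mult)
  have "cfr_seq N \<pi> i t * cnj (cfr_seq N \<pi> j s) = z ^ (p * t) * cnj (z ^ (p' * s))"
    by (simp add: cfr_seq_def t_mod s_mod z_def p_def p'_def)
  also have "\<dots> = z powi (int (p * t) - int (p' * s))"
    unfolding z_def by (rule omega_power_mult_cnj_power)
  \<comment> \<open>N + 1 divides L and N = -1 modulo N + 1\<close>
  also have "int (p * t) - int (p' * s) = (int (p * a) - int (p' * (a + \<tau>)) + (int p' - int p) * int q)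
          + int (N + 1) * ((int p - int p') * int q + int p' * int N * int d)"
    unfolding s_int t_def of_nat_mult of_nat_add of_nat_1 by (simp add: algebra_simps)
  also have "z powi \<dots> = z powi (int (p * a) - int (p' * (a + \<tau>)) + (int p' - int p) * int q)"
    unfolding z_def by (rule omega_powi_add_mult) simp
  also have "\<dots> = z powi (int (p * a) - int (p' * (a + \<tau>))) * (z powi (int p' - int p)) ^ q"
    by (simp add: z_def power_int_add power_int_power')
  finally show ?thesis
    by (simp add: cfr_phase_def z_def p_def p'_def t_def s_def)
qed

lemma pcorr_cfr_seq:
  assumes "\<forall>a<N. \<pi> i a \<le> N" and "\<forall>a<N. \<pi> j a \<le> N"
  shows "pcorr (N * (N + 1)) (cfr_seq N \<pi> i) (cfr_seq N \<pi> j) \<tau>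
           = of_nat (N + 1) * (\<Sum>a\<in>cfr_hits N \<pi> i j \<tau>. cfr_phase N \<pi> i j \<tau> a)"
proof -
  define w where "w a = omega (N + 1) powi (int (\<pi> j ((a + \<tau>) mod N)) - int (\<pi> i a))" for a
  have w_root: "w a ^ (N + 1) = 1" for a
    unfolding w_def power_int_power' by (rule iffD2[OF omega_powi_eq_1_iff]) simp_all
  have w_eq_1: "w a = 1 \<longleftrightarrow> a \<in> cfr_hits N \<pi> i j \<tau>" if "a < N" for a
  proof -
    have "(a + \<tau>) mod N < N"
      using that by simp
    then show ?thesis
      using assms that omega_powi_diff_eq_1_iff by (auto simp: w_def cfr_hits_def)
  qed
  have "pcorr (N * (N + 1)) (cfr_seq N \<pi> i) (cfr_seq N \<pi> j) \<tau>
        = (\<Sum>q<N + 1. \<Sum>a<N. cfr_seq N \<pi> i (a + q * N)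
              * cnj (cfr_seq N \<pi> j ((a + q * N + \<tau>) mod (N * (N + 1)))))"
    unfolding pcorr_def by (subst mult.commute) (rule sum_mult_product)
  also have "\<dots> = (\<Sum>a<N. \<Sum>q<N + 1. cfr_phase N \<pi> i j \<tau> a * w a ^ q)"
    by (subst sum.swap) (intro sum.cong refl, simp only: lessThan_iff w_def cfr_seq_corr_term)
  also have "\<dots> = (\<Sum>a<N. cfr_phase N \<pi> i j \<tau> a * (\<Sum>q<N + 1. w a ^ q))"
    by (simp only: sum_distrib_left)
  also have "\<dots> = (\<Sum>a<N. if a \<in> cfr_hits N \<pi> i j \<tau> then of_nat (N + 1) * cfr_phase N \<pi> i j \<tau> a else 0)"
    by (rule sum.cong[OF refl], simp only: lessThan_iff sum_power_root_of_unity[OF w_root] w_eq_1, simp)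
  also have "\<dots> = (\<Sum>a\<in>{..<N} \<inter> cfr_hits N \<pi> i j \<tau>. of_nat (N + 1) * cfr_phase N \<pi> i j \<tau> a)"
    by (simp only: sum.inter_restrict finite_lessThan)
  also have "{..<N} \<inter> cfr_hits N \<pi> i j \<tau> = cfr_hits N \<pi> i j \<tau>"
    by (auto simp: cfr_hits_def)
  also have "(\<Sum>a\<in>cfr_hits N \<pi> i j \<tau>. of_nat (N + 1) * cfr_phase N \<pi> i j \<tau> a)
             = of_nat (N + 1) * (\<Sum>a\<in>cfr_hits N \<pi> i j \<tau>. cfr_phase N \<pi> i j \<tau> a)"
    by (rule sum_distrib_left[symmetric])
  finally show ?thesis .
qed

lemma norm_pcorr_cfr_seq_le:
  assumes "\<forall>a<N. \<pi> i a \<le> N" and "\<forall>a<N. \<pi> j a \<le> N"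
  shows "norm (pcorr (N * (N + 1)) (cfr_seq N \<pi> i) (cfr_seq N \<pi> j) \<tau>)
           \<le> real (N + 1) * real (card (cfr_hits N \<pi> i j \<tau>))"
proof -
  have "norm (\<Sum>a\<in>cfr_hits N \<pi> i j \<tau>. cfr_phase N \<pi> i j \<tau> a)
          \<le> (\<Sum>a\<in>cfr_hits N \<pi> i j \<tau>. norm (cfr_phase N \<pi> i j \<tau> a))"
    by (rule norm_sum)
  then show ?thesis
    unfolding pcorr_cfr_seq[OF assms] norm_mult norm_of_nat by (simp add: mult_left_mono)
qed

section \<open>Circular Florentine rectangles\<close>

lemma is_CFR_bij: "is_CFR N K \<pi> \<Longrightarrow> i < K \<Longrightarrow> bij_betw (\<pi> i) {..<N} {..<N}"
  unfolding is_CFR_def by blast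

lemma is_CFR_less: "is_CFR N K \<pi> \<Longrightarrow> i < K \<Longrightarrow> a < N \<Longrightarrow> \<pi> i a < N"
  using is_CFR_bij bij_betwE by blast

lemma is_CFR_row_le: "is_CFR N K \<pi> \<Longrightarrow> i < K \<Longrightarrow> \<forall>a<N. \<pi> i a \<le> N"
  using is_CFR_less less_imp_le by blast

lemma is_CFR_shiftD:
  assumes "is_CFR N K \<pi>" "1 \<le> m" "m < N" "i < K" "j < K" "x < N" "y < N"
    and "\<pi> i x = \<pi> j y" "\<pi> i ((x + m) mod N) = \<pi> j ((y + m) mod N)"
  shows "i = j \<and> x = y"
  using assms unfolding is_CFR_def by blast

lemma is_CFR_hits_unique:
  assumes cfr: "is_CFR N K \<pi>" and "i < K" "j < K" "i \<noteq> j"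
    and "a \<in> cfr_hits N \<pi> i j \<tau>" "a' \<in> cfr_hits N \<pi> i j \<tau>"
  shows "a = a'"
proof -
  have False if "a < a'" "a \<in> cfr_hits N \<pi> i j \<tau>" "a' \<in> cfr_hits N \<pi> i j \<tau>" for a a'
  proof -
    define m where "m = a' - a"
    have "a' < N"
      using that by (simp add: cfr_hits_def)
    have "a + m = a'" and shift: "a + \<tau> + m = a' + \<tau>"
      using \<open>a < a'\<close> by (simp_all add: m_def)
    then have "(a + m) mod N = a'"
      using \<open>a' < N\<close> by simp
    moreover have "((a + \<tau>) mod N + m) mod N = (a' + \<tau>) mod N"
      by (simp only: mod_add_left_eq shift)
    moreover have "1 \<le> m" "m < N"
      using \<open>a < a'\<close> \<open>a' < N\<close> by (simp_all add: m_def)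
    ultimately show False
      using that is_CFR_shiftD[OF cfr _ _ \<open>i < K\<close> \<open>j < K\<close>, of m a "(a + \<tau>) mod N"] \<open>i \<noteq> j\<close>
      by (auto simp: cfr_hits_def)
  qed
  then show ?thesis
    using assms(5,6) by (metis linorder_neqE_nat)
qed

lemma card_cfr_hits_le_1:
  assumes "is_CFR N K \<pi>" "i < K" "j < K" "i \<noteq> j"
  shows "card (cfr_hits N \<pi> i j \<tau>) \<le> 1"
proof -
  have "finite (cfr_hits N \<pi> i j \<tau>)"
    by (simp add: cfr_hits_def)
  then show ?thesis
    using is_CFR_hits_unique[OF assms] by (simp add: card_le_Suc0_iff_eq)
qed

lemma is_CFR_le_length:
  assumes cfr: "is_CFR N M \<pi>" and "2 \<le> N"
  shows "M \<le> N"
proof -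
  define f where "f = (\<lambda>(i, x). (\<pi> i x, \<pi> i ((x + 1) mod N)))"
  have "inj_on f ({..<M} \<times> {..<N})"
    using is_CFR_shiftD[OF cfr, of 1] \<open>2 \<le> N\<close> by (auto simp: inj_on_def f_def)
  moreover have "f ` ({..<M} \<times> {..<N}) \<subseteq> {..<N} \<times> {..<N}"
    using is_CFR_less[OF cfr] \<open>2 \<le> N\<close> by (auto simp: f_def)
  ultimately have "card ({..<M} \<times> {..<N}) \<le> card ({..<N} \<times> {..<N})"
    by (intro card_inj_on_le) auto
  then show ?thesis
    using \<open>2 \<le> N\<close> by (simp add: card_cartesian_product)
qed

lemma le_F_tilde:
  assumes "is_CFR N M \<pi>" "2 \<le> N"
  shows "M \<le> F_tilde N"
  unfolding F_tilde_def
  using assms is_CFR_le_length[OF _ \<open>2 \<le> N\<close>] by (intro Greatest_le_nat[where b = N]) auto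

lemma bij_betw_mult_mod:
  fixes c N :: nat
  assumes "coprime c N"
  shows "bij_betw (\<lambda>x. (c * x) mod N) {..<N} {..<N}"
proof -
  have "inj_on (\<lambda>x. (c * x) mod N) {..<N}"
  proof (rule inj_onI)
    fix x y assume "x \<in> {..<N}" "y \<in> {..<N}" "(c * x) mod N = (c * y) mod N"
    then have "[x = y] (mod N)" and "x < N" "y < N"
      using cong_mult_lcancel_nat[OF assms] by (simp_all add: cong_def)
    then show "x = y"
      by (rule cong_less_modulus_unique_nat)
  qed
  moreover have "(\<lambda>x. (c * x) mod N) ` {..<N} \<subseteq> {..<N}"
    by auto
  ultimately show ?thesis
    by (simp add: bij_betw_def endo_inj_surj)
qed

lemma cong_mult_shift_nat:
  fixes c c' x y m N :: nat
  assumes "[c * x = c' * y] (mod N)" and "[c * (x + m) = c' * (y + m)] (mod N)"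
  shows "[c * m = c' * m] (mod N)"
proof -
  have "[c * x + c * m = c' * y + c' * m] (mod N)"
    using assms(2) by (simp only: add_mult_distrib2)
  moreover have "[c' * y + c * m = c * x + c * m] (mod N)"
    using assms(1) by (simp only: cong_add_rcancel_nat cong_sym_eq)
  ultimately have "[c' * y + c * m = c' * y + c' * m] (mod N)"
    by (rule cong_trans[rotated])
  then show ?thesis
    by (simp only: cong_add_lcancel_nat)
qed

lemma cong_mult_add_cancel_nat:
  fixes c d m N :: nat
  assumes "[c * m = (c + d) * m] (mod N)" and "coprime d N"
  shows "[m = 0] (mod N)"
proof -
  have "[c * m + d * m = c * m] (mod N)"
    using assms(1) by (simp only: add_mult_distrib cong_sym_eq)
  then have "[d * m = d * 0] (mod N)"
    by (simp only: cong_add_lcancel_0_nat mult_0_right)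
  then show ?thesis
    using cong_mult_lcancel_nat[OF assms(2)] by blast
qed

lemma is_CFR_multipliers:
  assumes coprime: "\<And>k. 1 \<le> k \<Longrightarrow> k \<le> M \<Longrightarrow> coprime k N"
  shows "is_CFR N M (\<lambda>i x. (Suc i * x) mod N)"
  unfolding is_CFR_def
proof (intro conjI allI impI)
  fix i assume "i < M"
  then show "bij_betw (\<lambda>x. (Suc i * x) mod N) {..<N} {..<N}"
    using coprime by (intro bij_betw_mult_mod) simp
next
  fix m i j x y assume m: "1 \<le> m \<and> m < N" and "i < M" "j < M" "x < N" "y < N"
  have rows_differ: False if "i' < j'" "j' < M" "[Suc i' * m = Suc j' * m] (mod N)" for i' j'
  proof -
    have "[Suc i' * m = (Suc i' + (j' - i')) * m] (mod N)"
      using that by simp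
    moreover have "coprime (j' - i') N"
      using that by (intro coprime) auto
    ultimately have "[m = 0] (mod N)"
      by (rule cong_mult_add_cancel_nat)
    then show False
      using m by (auto simp: cong_0_iff dest: dvd_imp_le)
  qed
  show "((Suc i * x) mod N = (Suc j * y) mod N \<and>
         (Suc i * ((x + m) mod N)) mod N = (Suc j * ((y + m) mod N)) mod N) \<longleftrightarrow> (i = j \<and> x = y)"
  proof
    assume h: "(Suc i * x) mod N = (Suc j * y) mod N \<and>
         (Suc i * ((x + m) mod N)) mod N = (Suc j * ((y + m) mod N)) mod N"
    then have start: "[Suc i * x = Suc j * y] (mod N)"
      by (simp add: cong_def)
    moreover have "[Suc i * (x + m) = Suc j * (y + m)] (mod N)"
      using h unfolding cong_def by (simp only: mod_mult_right_eq)
    ultimately have shift: "[Suc i * m = Suc j * m] (mod N)"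
      by (rule cong_mult_shift_nat)
    have "i = j"
    proof (rule ccontr)
      assume "i \<noteq> j"
      then consider "i < j" | "j < i"
        by linarith
      then show False
        using rows_differ shift \<open>i < M\<close> \<open>j < M\<close> cong_sym by cases blast+
    qed
    moreover have "coprime (Suc i) N"
      using \<open>i < M\<close> by (intro coprime) auto
    then have "[x = y] (mod N)"
      using start \<open>i = j\<close> cong_mult_lcancel_nat by blast
    then have "x = y"
      using \<open>x < N\<close> \<open>y < N\<close> by (rule cong_less_modulus_unique_nat)
    ultimately show "i = j \<and> x = y" ..
  qed simp
qed

lemma F_tilde_ge_2:
  assumes "odd N" "3 \<le> N"
  shows "2 \<le> F_tilde N"
proof (rule le_F_tilde)
  show "is_CFR N 2 (\<lambda>i x. (Suc i * x) mod N)"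
  proof (rule is_CFR_multipliers)
    fix k :: nat assume "1 \<le> k" "k \<le> 2"
    then have "k = 1 \<or> k = 2"
      by auto
    then show "coprime k N"
      using \<open>odd N\<close> by auto
  qed
qed (use assms in simp)

lemma norm_cross_pcorr_cfr_seq_le:
  assumes "is_CFR N K \<pi>" "i < K" "j < K" "i \<noteq> j"
  shows "norm (pcorr (N * (N + 1)) (cfr_seq N \<pi> i) (cfr_seq N \<pi> j) \<tau>) \<le> real (N + 1)"
proof -
  have "real (card (cfr_hits N \<pi> i j \<tau>)) \<le> 1"
    using card_cfr_hits_le_1[OF assms] by simp
  then show ?thesis
    using norm_pcorr_cfr_seq_le[of N \<pi> i j, OF is_CFR_row_le[OF assms(1,2)] is_CFR_row_le[OF assms(1,3)], of \<tau>]
    by (meson mult_left_le of_nat_0_le_iff order_trans)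
qed

lemma cross_pcorr_cfr_seq_attained:
  assumes cfr: "is_CFR N K \<pi>" and "i < K" "j < K" "i \<noteq> j" "0 < N"
  obtains \<tau> where "\<tau> < N"
    "norm (pcorr (N * (N + 1)) (cfr_seq N \<pi> i) (cfr_seq N \<pi> j) \<tau>) = real (N + 1)"
proof -
  have "\<pi> i 0 \<in> \<pi> j ` {..<N}"
    using bij_betw_imp_surj_on[OF is_CFR_bij[OF cfr \<open>j < K\<close>]] is_CFR_less[OF cfr \<open>i < K\<close> \<open>0 < N\<close>]
    by simp
  then obtain y where y: "y < N" "\<pi> j y = \<pi> i 0"
    by (metis imageE lessThan_iff)
  then have "0 \<in> cfr_hits N \<pi> i j y"
    using \<open>0 < N\<close> by (simp add: cfr_hits_def)
  then have "cfr_hits N \<pi> i j y = {0}"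
    using is_CFR_hits_unique[OF cfr \<open>i < K\<close> \<open>j < K\<close> \<open>i \<noteq> j\<close>] by blast
  then have "norm (pcorr (N * (N + 1)) (cfr_seq N \<pi> i) (cfr_seq N \<pi> j) y) = real (N + 1)"
    unfolding pcorr_cfr_seq[of N \<pi> i j, OF is_CFR_row_le[OF cfr \<open>i < K\<close>] is_CFR_row_le[OF cfr \<open>j < K\<close>]]
      norm_mult norm_of_nat by simp
  with \<open>y < N\<close> show ?thesis
    using that by blast
qed

lemma cfr_hits_self_eq_empty:
  assumes "bij_betw (\<pi> i) {..<N} {..<N}" and "\<not> N dvd \<tau>"
  shows "cfr_hits N \<pi> i i \<tau> = {}"
proof (rule ccontr)
  assume "cfr_hits N \<pi> i i \<tau> \<noteq> {}"
  then obtain a where "a < N" "\<pi> i a = \<pi> i ((a + \<tau>) mod N)"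
    by (auto simp: cfr_hits_def)
  moreover have "(a + \<tau>) mod N < N"
    using \<open>a < N\<close> by simp
  ultimately have "a mod N = (a + \<tau>) mod N"
    using assms(1) by (simp add: bij_betw_def inj_on_def)
  then have "N dvd (a + \<tau>) - a"
    using mod_eq_dvd_iff_nat[of a "a + \<tau>" N] by simp
  with assms(2) show False
    by simp
qed

lemma omega_powi_minus_mult_neq_1:
  assumes "0 < s" "s \<le> N"
  shows "omega (N + 1) powi (- int (N * s)) \<noteq> 1"
proof
  assume "omega (N + 1) powi (- int (N * s)) = 1"
  then have "N + 1 dvd N * s"
    by (simp add: omega_powi_eq_1_iff del: of_nat_Suc of_nat_mult)
  then have "N + 1 dvd s"
    by (simp add: coprime_dvd_mult_right_iff)
  with assms show False
    by (auto dest: dvd_imp_le)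
qed

lemma norm_auto_pcorr_cfr_seq_multiple:
  assumes bij: "bij_betw (\<pi> i) {..<N} {..<N}" and "0 < s" "s \<le> N"
  shows "norm (pcorr (N * (N + 1)) (cfr_seq N \<pi> i) (cfr_seq N \<pi> i) (N * s)) = real (N + 1)"
proof -
  define y where "y = omega (N + 1) powi (- int (N * s))"
  have row: "\<forall>a<N. \<pi> i a \<le> N"
    by (meson bij_betwE[OF bij] lessThan_iff less_imp_le)
  have "cfr_hits N \<pi> i i (N * s) = {..<N}"
    by (auto simp: cfr_hits_def)
  moreover have "cfr_phase N \<pi> i i (N * s) a = y ^ \<pi> i a" if "a < N" for a
  proof -
    have "int (\<pi> i a * a) - int (\<pi> i a * (a + N * s)) = - int (N * s) * int (\<pi> i a)"
      by (simp add: algebra_simps)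
    with that show ?thesis
      by (simp add: cfr_phase_def y_def power_int_power')
  qed
  moreover have "(\<Sum>a<N. y ^ \<pi> i a) = (\<Sum>v<N. y ^ v)"
    using sum.reindex_bij_betw[OF bij, of "\<lambda>v. y ^ v"] .
  moreover have "y ^ Suc N = 1"
    unfolding y_def power_int_power' by (rule iffD2[OF omega_powi_eq_1_iff]) simp_all
  then have "norm (\<Sum>v<N. y ^ v) = 1"
  proof (rule norm_sum_powers_root_of_unity[rotated])
    show "norm y = 1"
      by (simp add: y_def norm_power_int)
    show "y \<noteq> 1"
      unfolding y_def by (rule omega_powi_minus_mult_neq_1[OF assms(2,3)])
  qed
  ultimately show ?thesis
    unfolding pcorr_cfr_seq[of N \<pi> i i, OF row row] norm_mult norm_of_nat by simp
qed

lemma norm_auto_pcorr_cfr_seq_le: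
  assumes cfr: "is_CFR N K \<pi>" and "i < K" "0 < \<tau>" "\<tau> < N * (N + 1)"
  shows "norm (pcorr (N * (N + 1)) (cfr_seq N \<pi> i) (cfr_seq N \<pi> i) \<tau>) \<le> real (N + 1)"
proof (cases "N dvd \<tau>")
  case False
  then show ?thesis
    using cfr_hits_self_eq_empty[of \<pi> i, OF is_CFR_bij[OF cfr \<open>i < K\<close>]]
    unfolding pcorr_cfr_seq[of N \<pi> i i, OF is_CFR_row_le[OF cfr \<open>i < K\<close>] is_CFR_row_le[OF cfr \<open>i < K\<close>]]
    by simp
next
  case True
  then obtain s where s: "\<tau> = N * s"
    by blast
  with \<open>\<tau> < N * (N + 1)\<close> have "s < N + 1"
    by (simp only: mult_less_cancel1)
  moreover have "0 < s"
    using s \<open>0 < \<tau>\<close> by simp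
  ultimately have "0 < s" "s \<le> N"
    by simp_all
  with s show ?thesis
    using norm_auto_pcorr_cfr_seq_multiple[of \<pi> i, OF is_CFR_bij[OF cfr \<open>i < K\<close>]] by simp
qed

lemma theta_c_eq:
  assumes cfr: "is_CFR N K \<pi>" and "0 < N" "2 \<le> K"
  shows "theta_c N K \<pi> = real (N + 1)"
proof -
  define A where "A = {cmod (pcorr (N * (N + 1)) (cfr_seq N \<pi> m) (cfr_seq N \<pi> m') \<tau>) | m m' \<tau>.
      m < K \<and> m' < K \<and> m \<noteq> m' \<and> \<tau> < N * (N + 1)}"
  have "A \<subseteq> (\<lambda>(m, m', \<tau>). cmod (pcorr (N * (N + 1)) (cfr_seq N \<pi> m) (cfr_seq N \<pi> m') \<tau>))
               ` ({..<K} \<times> {..<K} \<times> {..<N * (N + 1)})"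
    unfolding A_def by force
  then have "finite A"
    by (rule finite_subset) simp
  moreover have "\<forall>x\<in>A. x \<le> real (N + 1)"
    unfolding A_def using norm_cross_pcorr_cfr_seq_le[OF cfr] by auto
  moreover have "real (N + 1) \<in> A"
  proof -
    obtain \<tau> where "\<tau> < N"
      and "cmod (pcorr (N * (N + 1)) (cfr_seq N \<pi> 0) (cfr_seq N \<pi> 1) \<tau>) = real (N + 1)"
      using cross_pcorr_cfr_seq_attained[OF cfr, of 0 1] assms by auto
    moreover have "\<tau> < N * (N + 1)"
      using \<open>\<tau> < N\<close> by (simp add: trans_less_add1)
    ultimately show ?thesis
      unfolding A_def using \<open>2 \<le> K\<close> by (intro CollectI exI[of _ 0] exI[of _ 1] exI[of _ \<tau>]) auto
  qed
  ultimately show ?thesis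
    unfolding theta_c_def A_def[symmetric] by (intro Max_eqI) auto
qed

lemma theta_a_le:
  assumes cfr: "is_CFR N K \<pi>" and "0 < N" "0 < K"
  shows "theta_a N K \<pi> \<le> real (N + 1)"
proof -
  define A where "A = {cmod (pcorr (N * (N + 1)) (cfr_seq N \<pi> m) (cfr_seq N \<pi> m) \<tau>) | m \<tau>.
      m < K \<and> 0 < \<tau> \<and> \<tau> < N * (N + 1)}"
  have "A \<subseteq> (\<lambda>(m, \<tau>). cmod (pcorr (N * (N + 1)) (cfr_seq N \<pi> m) (cfr_seq N \<pi> m) \<tau>))
               ` ({..<K} \<times> {..<N * (N + 1)})"
    unfolding A_def by force
  then have "finite A"
    by (rule finite_subset) simp
  moreover have "1 < N * (N + 1)"
    using \<open>0 < N\<close> by (cases N) auto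
  then have "A \<noteq> {}"
    unfolding A_def using \<open>0 < K\<close> by blast
  moreover have "\<forall>x\<in>A. x \<le> real (N + 1)"
    unfolding A_def using norm_auto_pcorr_cfr_seq_le[OF cfr] by auto
  ultimately show ?thesis
    unfolding theta_a_def A_def[symmetric] by (intro Max.boundedI) auto
qed

lemma theta_max_eq:
  assumes "is_CFR N K \<pi>" "0 < N" "2 \<le> K"
  shows "theta_max N K \<pi> = real (N + 1)"
  using theta_c_eq[OF assms] theta_a_le[OF assms(1,2)] assms(3) by (simp add: theta_max_def)

section \<open>Comparison with theta_opti\<close>

lemma theta_opti_eq:
  "theta_opti K L n = real L / sqrt (real L - real n)
     * sqrt (((real K - 1) * real L + real n) / (real K * real L - 1))"
  by (simp add: theta_opti_def real_sqrt_divide real_sqrt_mult)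

lemma cfr_length_div_sqrt:
  assumes "0 < N"
  shows "real (N * (N + 1)) / sqrt (real (N * (N + 1)) - real N) = real (N + 1)"
proof -
  have "real (N * (N + 1)) - real N = real N ^ 2"
    by (simp add: algebra_simps power2_eq_square)
  then show ?thesis
    using assms by (simp add: field_simps power2_eq_square)
qed

lemma theta_opti_fraction_bounds:
  fixes k l n :: real
  assumes "2 \<le> k" "0 \<le> n" "n + 1 \<le> l"
  shows "1 - 1 / k \<le> ((k - 1) * l + n) / (k * l - 1)" and "((k - 1) * l + n) / (k * l - 1) \<le> 1"
proof -
  have "2 * 1 \<le> k * l"
    using assms by (intro mult_mono) auto
  then have pos: "0 < k * l - 1"
    by simp
  have "1 / k \<le> 1"
    using assms by simp
  have "(1 - 1 / k) * (k * l - 1) = (k - 1) * l - 1 + 1 / k"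
    using assms by (simp add: field_simps)
  also have "\<dots> \<le> (k - 1) * l + n"
    using \<open>1 / k \<le> 1\<close> \<open>0 \<le> n\<close> by linarith
  finally show "1 - 1 / k \<le> ((k - 1) * l + n) / (k * l - 1)"
    using pos by (simp add: le_divide_eq)
  show "((k - 1) * l + n) / (k * l - 1) \<le> 1"
    using pos assms by (simp add: divide_le_eq algebra_simps)
qed

lemma tendsto_theta_opti_fraction:
  fixes K L n :: "'a \<Rightarrow> real"
  assumes K: "filterlim K at_top F" and "\<And>x. 0 \<le> n x" "\<And>x. n x + 1 \<le> L x"
  shows "((\<lambda>x. ((K x - 1) * L x + n x) / (K x * L x - 1)) \<longlongrightarrow> 1) F"
proof (rule tendsto_sandwich)
  have "eventually (\<lambda>x. 2 \<le> K x) F"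
    using K by (simp add: filterlim_at_top)
  then show "eventually (\<lambda>x. 1 - 1 / K x \<le> ((K x - 1) * L x + n x) / (K x * L x - 1)) F"
    by (rule eventually_mono) (rule theta_opti_fraction_bounds(1)[OF _ assms(2,3)])
  from \<open>eventually (\<lambda>x. 2 \<le> K x) F\<close>
  show "eventually (\<lambda>x. ((K x - 1) * L x + n x) / (K x * L x - 1) \<le> 1) F"
    by (rule eventually_mono) (rule theta_opti_fraction_bounds(2)[OF _ assms(2,3)])
  have "((\<lambda>x. 1 - inverse (K x)) \<longlongrightarrow> 1 - 0) F"
    by (intro tendsto_intros tendsto_inverse_0_at_top[OF K])
  then show "((\<lambda>x. 1 - 1 / K x) \<longlongrightarrow> 1) F"
    by (simp add: inverse_eq_divide)
qed simp

lemma theta_max_div_theta_opti: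
  assumes "is_CFR N K \<pi>" "0 < N" "2 \<le> K"
  shows "theta_max N K \<pi> / theta_opti K (N * (N + 1)) N
           = 1 / sqrt (((real K - 1) * real (N * (N + 1)) + real N) / (real K * real (N * (N + 1)) - 1))"
  unfolding theta_max_eq[OF assms] theta_opti_eq cfr_length_div_sqrt[OF \<open>0 < N\<close>] by simp

lemma tendsto_theta_max_div_theta_opti:
  assumes "\<And>x. is_CFR (N x) (K x) (\<pi> x)" "\<And>x. 0 < N x" "\<And>x. 2 \<le> K x"
    and K: "filterlim K at_top F"
  shows "((\<lambda>x. theta_max (N x) (K x) (\<pi> x) / theta_opti (K x) (N x * (N x + 1)) (N x)) \<longlongrightarrow> 1) F"
proof -
  have "((\<lambda>x. ((real (K x) - 1) * real (N x * (N x + 1)) + real (N x))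
              / (real (K x) * real (N x * (N x + 1)) - 1)) \<longlongrightarrow> 1) F"
  proof (rule tendsto_theta_opti_fraction)
    show "filterlim (\<lambda>x. real (K x)) at_top F"
      using K by (rule filterlim_compose[OF filterlim_real_sequentially])
    have "N x + 1 \<le> N x * (N x + 1)" for x
      using assms(2)[of x] by simp
    then show "real (N x) + 1 \<le> real (N x * (N x + 1))" for x
      by (metis of_nat_1 of_nat_add of_nat_le_iff)
  qed simp
  then have "((\<lambda>x. 1 / sqrt (((real (K x) - 1) * real (N x * (N x + 1)) + real (N x))
              / (real (K x) * real (N x * (N x + 1)) - 1))) \<longlongrightarrow> 1 / sqrt 1) F"
    by (intro tendsto_intros) simp_all
  then show ?thesis
    by (simp only: theta_max_div_theta_opti[OF assms(1-3)] real_sqrt_one div_by_1)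
qed

theorem theorem4:
  shows "(\<forall>N \<pi>. odd N \<and> N \<ge> 3 \<and> is_CFR N (F_tilde N) \<pi> \<longrightarrow>
            theta_c N (F_tilde N) \<pi> = real (N * (N + 1)) / sqrt (real (N * (N + 1)) - real N))
       \<and> (\<forall>(Ns :: nat \<Rightarrow> nat) (P :: nat \<Rightarrow> nat \<Rightarrow> nat \<Rightarrow> nat).
            (\<forall>k. odd (Ns k) \<and> Ns k \<ge> 3 \<and> is_CFR (Ns k) (F_tilde (Ns k)) (P k)) \<and>
            filterlim Ns at_top sequentially \<and>
            filterlim (\<lambda>k. F_tilde (Ns k)) at_top sequentially \<longrightarrow>
            (\<lambda>k. theta_max (Ns k) (F_tilde (Ns k)) (P k) /
                 theta_opti (F_tilde (Ns k)) (Ns k * (Ns k + 1)) (Ns k)) \<longlonglongrightarrow> 1)"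
proof (intro conjI allI impI)
  fix N \<pi> assume h: "odd N \<and> N \<ge> 3 \<and> is_CFR N (F_tilde N) \<pi>"
  then have "theta_c N (F_tilde N) \<pi> = real (N + 1)"
    using F_tilde_ge_2 by (intro theta_c_eq) auto
  with h show "theta_c N (F_tilde N) \<pi> = real (N * (N + 1)) / sqrt (real (N * (N + 1)) - real N)"
    by (subst cfr_length_div_sqrt) auto
next
  fix Ns :: "nat \<Rightarrow> nat" and P :: "nat \<Rightarrow> nat \<Rightarrow> nat \<Rightarrow> nat"
  assume h: "(\<forall>k. odd (Ns k) \<and> Ns k \<ge> 3 \<and> is_CFR (Ns k) (F_tilde (Ns k)) (P k)) \<and>
            filterlim Ns at_top sequentially \<and>
            filterlim (\<lambda>k. F_tilde (Ns k)) at_top sequentially"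
  then have N: "odd (Ns k)" "3 \<le> Ns k" and cfr: "is_CFR (Ns k) (F_tilde (Ns k)) (P k)" for k
    by blast+
  have "0 < Ns k" for k
    using N(2)[of k] by linarith
  with h cfr show "(\<lambda>k. theta_max (Ns k) (F_tilde (Ns k)) (P k) /
                 theta_opti (F_tilde (Ns k)) (Ns k * (Ns k + 1)) (Ns k)) \<longlonglongrightarrow> 1"
    using F_tilde_ge_2[OF N] by (intro tendsto_theta_max_div_theta_opti) auto
qed

end
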